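(* In the multi-period newsvendor setting described in the context, suppose the demands $X_1,\dots,X_T$ are independent with $X_t\sim\mathcal N(\mu_t,\sigma_t^2)$, $\sigma_t>0$, and write $\boldsymbol\omega=(\boldsymbol\mu,\boldsymbol\sigma)$. Then, for every fixed $\boldsymbol q$, the expected cost $C_{\boldsymbol\omega}(\boldsymbol q)$ is (1) convex in $\mu_t$ for every $t\in\{1,\dots,T\}$, and (2) increasing in $\sigma_t$ for every $t\in\{1,\dots,T\}$.
   Context: There are $T$ periods; $q_t$ is the order delivered at the start of period $t$, $X_t$ the demand in period $t$. Inventory: $I_t=\sum_{k=1}^t(q_k-X_k)$, $I_t^+=\max\{I_t,0\}$, $I_t^-=\max\{-I_t,0\}$. Nonnegative constants: holding cost $h$, backorder cost $b$, price $p$; unit ordering costs $w_t$. The expected cost under parameters $\boldsymbol\omega$ is $$C_{\boldsymbol\omega}(\boldsymbol q)=p\,\mathbb E_{\boldsymbol\omega}[I_T^-]+\sum_{t=1}^T\Big(h\,\mathbb E_{\boldsymbol\omega}[I_t^+]+b\,\mathbb E_{\boldsymbol\omega}[I_t^-]+w_tq_t-p\,\mathbb E_{\boldsymbol\omega}[X_t]\Big).$$ *)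

theory Defs
  imports "HOL-Probability.Probability"
begin

text \<open>Joint law of the independent demands X_1..X_T with X_t ~ N(mu t, sig t^2):
  the product of the normal laws on the index set {1..T}; the demand X_t is the coordinate t.\<close>
definition demand_space :: "nat \<Rightarrow> (nat \<Rightarrow> real) \<Rightarrow> (nat \<Rightarrow> real) \<Rightarrow> (nat \<Rightarrow> real) measure" where
  "demand_space T mu sig = PiM {1..T} (\<lambda>t. density lborel (normal_density (mu t) (sig t)))"

definition inv_level :: "(nat \<Rightarrow> real) \<Rightarrow> nat \<Rightarrow> (nat \<Rightarrow> real) \<Rightarrow> real" where
  "inv_level q t X = (\<Sum>k=1..t. q k - X k)"

definition pos_part :: "real \<Rightarrow> real" where "pos_part x = max x 0"
definition neg_part :: "real \<Rightarrow> real" where "neg_part x = max (- x) 0"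

definition exp_cost :: "nat \<Rightarrow> real \<Rightarrow> real \<Rightarrow> real \<Rightarrow> (nat \<Rightarrow> real) \<Rightarrow>
    (nat \<Rightarrow> real) \<Rightarrow> (nat \<Rightarrow> real) \<Rightarrow> (nat \<Rightarrow> real) \<Rightarrow> real" where
  "exp_cost T h b p w mu sig q =
    (let M = demand_space T mu sig in
      p * (\<integral>X. neg_part (inv_level q T X) \<partial>M)
      + (\<Sum>t=1..T. h * (\<integral>X. pos_part (inv_level q t X) \<partial>M)
                   + b * (\<integral>X. neg_part (inv_level q t X) \<partial>M)
                   + w t * q t
                   - p * (\<integral>X. X t \<partial>M)))"

end

theory Submission
  imports Defs
begin

(* The inventory level I_t = Q_t - (X_1 + ... + X_t) is normal with mean Q_t - M_t and standard
   deviation S_t, where M_t and S_t^2 are the partial sums of the means and variances. Every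
   expectation in the cost is therefore E g(a + s Z) with Z standard normal, g convex (the positive
   or negative part) and (a, s) = (Q_t - M_t, S_t). This function is jointly convex in (a, s), and
   Q_t - M_t is affine in each mu_k, which gives convexity in the means. It is also even in s
   (Z and -Z have the same law), so as an even convex function of s it is nondecreasing for s >= 0;
   S_t is nondecreasing in each sigma_k, which gives monotonicity. *)

lemma convex_on_line:
  assumes "convex_on UNIV f"
  shows "convex_on UNIV (\<lambda>u::real. f (x + u *\<^sub>R v))"
proof (rule convex_onI)
  fix t u w :: real assume "0 < t" "t < 1"
  have "x + ((1 - t) *\<^sub>R u + t *\<^sub>R w) *\<^sub>R v = (1 - t) *\<^sub>R (x + u *\<^sub>R v) + t *\<^sub>R (x + w *\<^sub>R v)"
    by (simp add: algebra_simps)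
  then show "f (x + ((1 - t) *\<^sub>R u + t *\<^sub>R w) *\<^sub>R v) \<le> (1 - t) * f (x + u *\<^sub>R v) + t * f (x + w *\<^sub>R v)"
    using convex_onD[OF assms, of t] \<open>0 < t\<close> \<open>t < 1\<close> by simp
qed simp

lemma convex_on_max:
  assumes f: "convex_on S f" and g: "convex_on S g"
  shows "convex_on S (\<lambda>x. max (f x) (g x))"
proof (rule convex_onI)
  fix t :: real and x y assume t: "0 < t" "t < 1" and "x \<in> S" "y \<in> S"
  have "(1 - t) * f x + t * f y \<le> (1 - t) * max (f x) (g x) + t * max (f y) (g y)"
    "(1 - t) * g x + t * g y \<le> (1 - t) * max (f x) (g x) + t * max (f y) (g y)"
    using t by (intro add_mono mult_left_mono; simp)+
  then show "max (f ((1 - t) *\<^sub>R x + t *\<^sub>R y)) (g ((1 - t) *\<^sub>R x + t *\<^sub>R y))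
      \<le> (1 - t) * max (f x) (g x) + t * max (f y) (g y)"
    using convex_onD[OF f, of t x y] convex_onD[OF g, of t x y] t \<open>x \<in> S\<close> \<open>y \<in> S\<close> by simp
qed (rule convex_on_imp_convex[OF f])

lemma convex_on_sum_fun:
  assumes "finite A" and "\<And>i. i \<in> A \<Longrightarrow> convex_on S (f i)" and "convex S"
  shows "convex_on S (\<lambda>x. \<Sum>i\<in>A. f i x)"
  using assms by (induction A rule: finite_induct) (auto simp: convex_on_const)

lemma sum_fun_upd:
  fixes f :: "'a \<Rightarrow> 'b::ab_group_add"
  assumes "finite A"
  shows "(\<Sum>k\<in>A. (f(t := m)) k) = (\<Sum>k\<in>A. f k) + (if t \<in> A then m - f t else 0)"
proof -
  have "(f(t := m)) k = f k + (if k = t then m - f t else 0)" for k by simp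
  then show ?thesis using assms by (simp add: sum.distrib)
qed

definition normal_expectation :: "(real \<Rightarrow> real) \<Rightarrow> real \<Rightarrow> real \<Rightarrow> real" where
  "normal_expectation g a s = (\<integral>z. std_normal_density z * g (a + s * z) \<partial>lborel)"

lemma integrable_normal_expectation:
  assumes "g \<in> borel_measurable borel" and growth: "\<And>x. \<bar>g x\<bar> \<le> c * (1 + \<bar>x\<bar>)"
  shows "integrable lborel (\<lambda>z. std_normal_density z * g (a + s * z))"
proof (rule Bochner_Integration.integrable_bound)
  show "integrable lborel (\<lambda>z. c * (1 + \<bar>a\<bar>) * (std_normal_density z * \<bar>z\<bar> ^ 0)
      + c * \<bar>s\<bar> * (std_normal_density z * \<bar>z\<bar> ^ 1))"
    by (intro Bochner_Integration.integrable_add Bochner_Integration.integrable_mult_right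
        integrable_std_normal_moment_abs)
  show "(\<lambda>z. std_normal_density z * g (a + s * z)) \<in> borel_measurable lborel"
    using assms(1) by measurable
  have "\<bar>g 0\<bar> \<le> c" using growth[of 0] by simp
  then have "0 \<le> c" using abs_ge_zero order_trans by blast
  show "AE z in lborel. norm (std_normal_density z * g (a + s * z))
      \<le> norm (c * (1 + \<bar>a\<bar>) * (std_normal_density z * \<bar>z\<bar> ^ 0)
        + c * \<bar>s\<bar> * (std_normal_density z * \<bar>z\<bar> ^ 1))"
  proof (rule AE_I2)
    fix z
    have "\<bar>g (a + s * z)\<bar> \<le> c * (1 + \<bar>a + s * z\<bar>)" by (rule growth)
    also have "\<dots> \<le> c * (1 + \<bar>a\<bar> + \<bar>s\<bar> * \<bar>z\<bar>)"
      using \<open>0 \<le> c\<close> abs_triangle_ineq[of a "s * z"] by (intro mult_left_mono) (auto simp: abs_mult)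
    finally have "std_normal_density z * \<bar>g (a + s * z)\<bar>
        \<le> std_normal_density z * (c * (1 + \<bar>a\<bar> + \<bar>s\<bar> * \<bar>z\<bar>))"
      by (rule mult_left_mono) simp
    then show "norm (std_normal_density z * g (a + s * z))
      \<le> norm (c * (1 + \<bar>a\<bar>) * (std_normal_density z * \<bar>z\<bar> ^ 0)
        + c * \<bar>s\<bar> * (std_normal_density z * \<bar>z\<bar> ^ 1))"
      using \<open>0 \<le> c\<close> by (simp add: abs_mult algebra_simps)
  qed
qed

lemma convex_on_normal_expectation:
  assumes convex: "convex_on UNIV g" and growth: "\<And>x. \<bar>g x\<bar> \<le> c * (1 + \<bar>x\<bar>)"
  shows "convex_on UNIV (\<lambda>(a, s). normal_expectation g a s)"
proof (rule convex_onI)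
  have "g \<in> borel_measurable borel"
    using convex_on_continuous[OF open_UNIV convex] by (rule borel_measurable_continuous_onI)
  note integrable = integrable_normal_expectation[OF this growth]
  fix t :: real and x y :: "real \<times> real" assume t: "0 < t" "t < 1"
  obtain a1 s1 a2 s2 where xy: "x = (a1, s1)" "y = (a2, s2)" by fastforce
  have pointwise: "g (((1 - t) * a1 + t * a2) + ((1 - t) * s1 + t * s2) * z)
      \<le> (1 - t) * g (a1 + s1 * z) + t * g (a2 + s2 * z)" for z
  proof -
    have "((1 - t) * a1 + t * a2) + ((1 - t) * s1 + t * s2) * z
        = (1 - t) *\<^sub>R (a1 + s1 * z) + t *\<^sub>R (a2 + s2 * z)"
      by (simp add: algebra_simps)
    then show ?thesis using convex_onD[OF convex, of t] t by simp
  qed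
  have "std_normal_density z * g (((1 - t) * a1 + t * a2) + ((1 - t) * s1 + t * s2) * z)
      \<le> (1 - t) * (std_normal_density z * g (a1 + s1 * z))
        + t * (std_normal_density z * g (a2 + s2 * z))" for z
    using mult_left_mono[OF pointwise[of z] normal_density_nonneg[of 0 1 z]] by (simp add: algebra_simps)
  then have "normal_expectation g ((1 - t) * a1 + t * a2) ((1 - t) * s1 + t * s2)
      \<le> (\<integral>z. (1 - t) * (std_normal_density z * g (a1 + s1 * z))
           + t * (std_normal_density z * g (a2 + s2 * z)) \<partial>lborel)"
    unfolding normal_expectation_def using integrable by (intro integral_mono) auto
  also have "\<dots> = (1 - t) * normal_expectation g a1 s1 + t * normal_expectation g a2 s2"
    unfolding normal_expectation_def using integrable by simp
  finally show "(\<lambda>(a, s). normal_expectation g a s) ((1 - t) *\<^sub>R x + t *\<^sub>R y)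
      \<le> (1 - t) * (\<lambda>(a, s). normal_expectation g a s) x + t * (\<lambda>(a, s). normal_expectation g a s) y"
    unfolding xy by simp
qed simp

corollary convex_on_normal_expectation_mean:
  assumes "convex_on UNIV g" and "\<And>x. \<bar>g x\<bar> \<le> c * (1 + \<bar>x\<bar>)"
  shows "convex_on UNIV (\<lambda>m. normal_expectation g (a + b * m) s)"
  using convex_on_line[OF convex_on_normal_expectation[OF assms], of "(a, s)" "(b, 0)"]
  by (simp add: mult.commute)

corollary convex_on_normal_expectation_scale:
  assumes "convex_on UNIV g" and "\<And>x. \<bar>g x\<bar> \<le> c * (1 + \<bar>x\<bar>)"
  shows "convex_on UNIV (normal_expectation g a)"
  using convex_on_line[OF convex_on_normal_expectation[OF assms], of "(a, 0)" "(0, 1)"] by simp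

lemma normal_expectation_uminus_scale: "normal_expectation g a (- s) = normal_expectation g a s"
proof -
  have "normal_expectation g a s
      = \<bar>-1\<bar> *\<^sub>R (\<integral>z. std_normal_density (0 + -1 * z) * g (a + s * (0 + -1 * z)) \<partial>lborel)"
    unfolding normal_expectation_def by (rule lborel_integral_real_affine) simp
  then show ?thesis
    by (simp add: normal_expectation_def normal_density_def)
qed

lemma mono_on_normal_expectation_scale:
  assumes "convex_on UNIV g" and "\<And>x. \<bar>g x\<bar> \<le> c * (1 + \<bar>x\<bar>)"
  shows "mono_on {0..} (normal_expectation g a)"
proof (rule mono_onI)
  fix x y :: real assume "x \<in> {0..}" "y \<in> {0..}" "x \<le> y"
  note convex = convex_on_normal_expectation_scale[OF assms]
  show "normal_expectation g a x \<le> normal_expectation g a y"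
  proof (cases "y = 0")
    case True
    then show ?thesis using \<open>x \<in> {0..}\<close> \<open>x \<le> y\<close> by simp
  next
    case False
    define l where "l = (x + y) / (2 * y)"
    have l: "0 \<le> l" "l \<le> 1" "(1 - l) *\<^sub>R (- y) + l *\<^sub>R y = x"
      using \<open>x \<in> {0..}\<close> \<open>x \<le> y\<close> False by (auto simp: l_def field_simps)
    then have "normal_expectation g a x
        \<le> (1 - l) * normal_expectation g a (- y) + l * normal_expectation g a y"
      using convex_onD[OF convex, of l "- y" y] by simp
    also have "\<dots> = normal_expectation g a y"
      by (simp add: normal_expectation_uminus_scale algebra_simps)
    finally show ?thesis .
  qed
qed

lemma integral_normal_density_eq_normal_expectation:
  assumes "0 < s"
  shows "(\<integral>y. normal_density a s y * f y \<partial>lborel) = normal_expectation f a s"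
proof -
  have density: "std_normal_density z = s * normal_density a s (a + s * z)" for z
    using assms by (simp add: normal_density_def real_sqrt_mult power_mult_distrib field_simps)
  have "(\<integral>y. normal_density a s y * f y \<partial>lborel)
      = \<bar>s\<bar> *\<^sub>R (\<integral>z. normal_density a s (a + s * z) * f (a + s * z) \<partial>lborel)"
    using assms by (intro lborel_integral_real_affine) simp
  also have "\<dots> = (\<integral>z. s * normal_density a s (a + s * z) * f (a + s * z) \<partial>lborel)"
    using assms by (simp add: mult.assoc)
  finally show ?thesis
    unfolding normal_expectation_def density .
qed

lemma indep_vars_PiM_components:
  assumes "\<And>i. i \<in> I \<Longrightarrow> prob_space (M i)" and "I \<noteq> {}"
  shows "prob_space.indep_vars (PiM I M) M (\<lambda>i x. x i) I"
proof -
  interpret prob_space "PiM I M" using assms(1) by (rule prob_space_PiM)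
  show ?thesis
  proof (subst indep_vars_iff_distr_eq_PiM')
    have "distr (PiM I M) (PiM I M) (\<lambda>x. \<lambda>i\<in>I. x i) = distr (PiM I M) (PiM I M) (\<lambda>x. x)"
      by (rule distr_cong) (auto simp: space_PiM)
    also have "\<dots> = PiM I (\<lambda>i. distr (PiM I M) (M i) (\<lambda>x. x i))"
      using assms(1) by (auto intro!: PiM_cong simp: distr_PiM_component)
    finally show "distr (PiM I M) (PiM I M) (\<lambda>x. \<lambda>i\<in>I. x i)
        = PiM I (\<lambda>i. distr (PiM I M) (M i) (\<lambda>x. x i))" .
  qed (use assms(2) in auto)
qed

lemma (in prob_space) indep_vars_cong_sets:
  assumes "\<And>i. i \<in> I \<Longrightarrow> sets (M' i) = sets (N' i)"
  shows "indep_vars M' X I \<longleftrightarrow> indep_vars N' X I"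
proof -
  have "indep_sets (\<lambda>i. {X i -` A \<inter> space M |A. A \<in> sets (M' i)}) I
      \<longleftrightarrow> indep_sets (\<lambda>i. {X i -` A \<inter> space M |A. A \<in> sets (N' i)}) I"
    using assms by (intro indep_sets_cong) auto
  then show ?thesis
    unfolding indep_vars_def2 by (auto simp: measurable_cong_sets[OF refl assms])
qed

lemma prob_space_demand_space:
  assumes "\<forall>t\<in>{1..T}. sig t > 0"
  shows "prob_space (demand_space T mu sig)"
  unfolding demand_space_def using assms by (intro prob_space_PiM) (auto intro: prob_space_normal_density)

lemma distributed_demand:
  assumes pos: "\<forall>t\<in>{1..T}. sig t > 0" and k: "k \<in> {1..T}"
  shows "distributed (demand_space T mu sig) lborel (\<lambda>X. X k) (normal_density (mu k) (sig k))"
proof -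
  let ?M = "\<lambda>t. density lborel (normal_density (mu t) (sig t))"
  have "distr (demand_space T mu sig) lborel (\<lambda>X. X k) = distr (PiM {1..T} ?M) (?M k) (\<lambda>X. X k)"
    unfolding demand_space_def by (rule distr_cong) auto
  also have "\<dots> = ?M k"
    using pos k by (intro distr_PiM_component) (auto intro: prob_space_normal_density)
  finally have "distr (demand_space T mu sig) lborel (\<lambda>X. X k) = ?M k" .
  moreover have "(\<lambda>X. X k) \<in> measurable (demand_space T mu sig) lborel"
    using measurable_component_singleton[OF k, of ?M] unfolding demand_space_def
    by (simp cong: measurable_cong_sets)
  ultimately show ?thesis unfolding distributed_def by simp
qed

lemma indep_vars_demand:
  assumes "\<forall>t\<in>{1..T}. sig t > 0" and "1 \<le> T"
  shows "prob_space.indep_vars (demand_space T mu sig) (\<lambda>_. borel) (\<lambda>k X. X k) {1..T}"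
proof -
  interpret prob_space "demand_space T mu sig" using prob_space_demand_space[OF assms(1)] .
  have "indep_vars (\<lambda>t. density lborel (normal_density (mu t) (sig t))) (\<lambda>k X. X k) {1..T}"
    unfolding demand_space_def using assms
    by (intro indep_vars_PiM_components) (auto intro: prob_space_normal_density)
  then show ?thesis by (subst indep_vars_cong_sets) auto
qed

definition cum_sum :: "(nat \<Rightarrow> real) \<Rightarrow> nat \<Rightarrow> real" where
  "cum_sum f j = (\<Sum>k=1..j. f k)"

definition cum_sd :: "(nat \<Rightarrow> real) \<Rightarrow> nat \<Rightarrow> real" where
  "cum_sd sig j = sqrt (\<Sum>k=1..j. (sig k)\<^sup>2)"

lemma distributed_demand_cum_sum:
  assumes pos: "\<forall>t\<in>{1..T}. sig t > 0" and j: "j \<in> {1..T}"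
  shows "distributed (demand_space T mu sig) lborel (\<lambda>X. cum_sum X j)
    (normal_density (cum_sum mu j) (cum_sd sig j))"
proof -
  interpret prob_space "demand_space T mu sig" using prob_space_demand_space[OF pos] .
  have "indep_vars (\<lambda>_. borel) (\<lambda>k X. X k) {1..j}"
    using indep_vars_subset[OF indep_vars_demand[OF pos]] j by auto
  then show ?thesis
    unfolding cum_sum_def cum_sd_def using pos j
    by (intro sum_indep_normal distributed_demand) auto
qed

lemma integral_demand:
  assumes pos: "\<forall>t\<in>{1..T}. sig t > 0" and j: "j \<in> {1..T}"
  shows "(\<integral>X. X j \<partial>demand_space T mu sig) = mu j"
proof -
  interpret prob_space "demand_space T mu sig" using prob_space_demand_space[OF pos] .
  show ?thesis
    using normal_distributed_expectation[OF _ distributed_demand[OF pos j]] pos j by simp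
qed

lemma integral_demand_inv_level:
  assumes pos: "\<forall>t\<in>{1..T}. sig t > 0" and j: "j \<in> {1..T}" and g: "g \<in> borel_measurable borel"
  shows "(\<integral>X. g (inv_level q j X) \<partial>demand_space T mu sig)
    = normal_expectation g (cum_sum q j - cum_sum mu j) (cum_sd sig j)"
proof -
  have "0 < cum_sd sig j"
    unfolding cum_sd_def using pos j by (intro real_sqrt_gt_zero sum_pos) force+
  have "inv_level q j X = cum_sum q j - cum_sum X j" for X
    by (simp add: inv_level_def cum_sum_def sum_subtractf)
  then have "(\<integral>X. g (inv_level q j X) \<partial>demand_space T mu sig)
      = (\<integral>y. normal_density (cum_sum mu j) (cum_sd sig j) y * g (cum_sum q j - y) \<partial>lborel)"
    using distributed_integral[OF distributed_demand_cum_sum[OF pos j], of "\<lambda>y. g (cum_sum q j - y)"] g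
    by simp
  also have "\<dots> = normal_expectation (\<lambda>y. g (cum_sum q j - y)) (cum_sum mu j) (cum_sd sig j)"
    using \<open>0 < cum_sd sig j\<close> by (rule integral_normal_density_eq_normal_expectation)
  also have "\<dots> = normal_expectation g (cum_sum q j - cum_sum mu j) (- cum_sd sig j)"
    unfolding normal_expectation_def by (rule Bochner_Integration.integral_cong) (simp_all add: algebra_simps)
  finally show ?thesis by (simp add: normal_expectation_uminus_scale)
qed

lemma exp_cost_eq:
  assumes pos: "\<forall>t\<in>{1..T}. sig t > 0" and "1 \<le> T"
  shows "exp_cost T h b p w mu sig q =
    p * normal_expectation neg_part (cum_sum q T - cum_sum mu T) (cum_sd sig T)
    + (\<Sum>t=1..T. h * normal_expectation pos_part (cum_sum q t - cum_sum mu t) (cum_sd sig t)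
               + b * normal_expectation neg_part (cum_sum q t - cum_sum mu t) (cum_sd sig t))
    + (\<Sum>t=1..T. w t * q t) + (- p) * cum_sum mu T"
proof -
  have "pos_part \<in> borel_measurable borel" unfolding pos_part_def by measurable
  moreover have "neg_part \<in> borel_measurable borel" unfolding neg_part_def by measurable
  moreover have "(\<Sum>t=1..T. p * (\<integral>X. X t \<partial>demand_space T mu sig)) = p * cum_sum mu T"
    using pos by (simp add: integral_demand cum_sum_def sum_distrib_left)
  ultimately show ?thesis
    unfolding exp_cost_def Let_def using assms
    by (simp add: integral_demand_inv_level sum.distrib sum_subtractf)
qed

lemma convex_on_pos_part: "convex_on UNIV pos_part"
  unfolding pos_part_def by (intro convex_on_max) (simp_all add: convex_on_ident convex_on_const)

lemma convex_on_neg_part: "convex_on UNIV neg_part"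
  unfolding neg_part_def
  by (intro convex_on_max convex_on_const[THEN iffD2])
    (simp_all add: convex_on_iff_concave concave_on_ident)

lemma cum_sum_fun_upd: "cum_sum (f(t := m)) j = cum_sum f j + (if t \<in> {1..j} then m - f t else 0)"
  unfolding cum_sum_def by (rule sum_fun_upd) simp

lemma convex_on_cum_sum_fun_upd: "convex_on UNIV (\<lambda>m. c * cum_sum (f(t := m)) j)"
  by (rule convex_onI) (auto simp: cum_sum_fun_upd algebra_simps)

lemma convex_on_normal_expectation_cum_sum_fun_upd:
  assumes "convex_on UNIV g" and "\<And>x. \<bar>g x\<bar> \<le> c * (1 + \<bar>x\<bar>)"
  shows "convex_on UNIV (\<lambda>m. normal_expectation g (x - cum_sum (f(t := m)) j) s)"
proof -
  have affine: "x - cum_sum (f(t := m)) j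
      = (x - cum_sum f j + (if t \<in> {1..j} then f t else 0)) + (if t \<in> {1..j} then -1 else 0) * m" for m
    by (simp add: cum_sum_fun_upd)
  show ?thesis
    unfolding affine by (rule convex_on_normal_expectation_mean[OF assms])
qed

lemma cum_sd_nonneg: "0 \<le> cum_sd sig j"
  unfolding cum_sd_def by (simp add: sum_nonneg)

lemma cum_sd_fun_upd_mono:
  assumes "0 \<le> x" and "x \<le> y"
  shows "cum_sd (sig(t := x)) j \<le> cum_sd (sig(t := y)) j"
  unfolding cum_sd_def using assms by (intro real_sqrt_le_mono sum_mono) (auto intro: power_mono)

lemma normal_expectation_cum_sd_fun_upd_mono:
  assumes "convex_on UNIV g" and "\<And>x. \<bar>g x\<bar> \<le> c * (1 + \<bar>x\<bar>)" and "0 \<le> x" and "x \<le> y"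
  shows "normal_expectation g a (cum_sd (sig(t := x)) j) \<le> normal_expectation g a (cum_sd (sig(t := y)) j)"
  by (rule mono_onD[OF mono_on_normal_expectation_scale[OF assms(1,2)]])
    (simp_all add: cum_sd_nonneg cum_sd_fun_upd_mono[OF assms(3,4)])

theorem theorem4p3:
  fixes T :: nat and h b p :: real and w q mu sig :: "nat \<Rightarrow> real"
  assumes "h \<ge> 0" and "b \<ge> 0" and "p \<ge> 0"
    and "\<forall>t\<in>{1..T}. w t \<ge> 0"
    and "\<forall>t\<in>{1..T}. sig t > 0"
  shows "(\<forall>t\<in>{1..T}. convex_on UNIV (\<lambda>m. exp_cost T h b p w (mu(t := m)) sig q))
       \<and> (\<forall>t\<in>{1..T}. mono_on {0<..} (\<lambda>s. exp_cost T h b p w mu (sig(t := s)) q))"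
proof (intro conjI ballI)
  \<comment> \<open>The ordering costs enter linearly.\<close>
  fix t assume "t \<in> {1..T}"
  then have T: "1 \<le> T" by simp
  note pos = assms(5)
  have growth: "\<bar>pos_part x\<bar> \<le> 1 * (1 + \<bar>x\<bar>)" "\<bar>neg_part x\<bar> \<le> 1 * (1 + \<bar>x\<bar>)" for x
    by (auto simp: pos_part_def neg_part_def)
  note convex_pos = convex_on_normal_expectation_cum_sum_fun_upd[OF convex_on_pos_part growth(1)]
    and convex_neg = convex_on_normal_expectation_cum_sum_fun_upd[OF convex_on_neg_part growth(2)]
  show "convex_on UNIV (\<lambda>m. exp_cost T h b p w (mu(t := m)) sig q)"
    unfolding exp_cost_eq[OF pos T] using assms(1-3)
    by (intro convex_on_add convex_on_cmul convex_on_sum_fun convex_on_cum_sum_fun_upd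
        convex_pos convex_neg convex_on_const[THEN iffD2]) auto
  note mono_pos = normal_expectation_cum_sd_fun_upd_mono[OF convex_on_pos_part growth(1)]
    and mono_neg = normal_expectation_cum_sd_fun_upd_mono[OF convex_on_neg_part growth(2)]
  show "mono_on {0<..} (\<lambda>s. exp_cost T h b p w mu (sig(t := s)) q)"
  proof (rule mono_onI)
    fix x y :: real assume x: "x \<in> {0<..}" and y: "y \<in> {0<..}" and "x \<le> y"
    have pos_upd: "\<forall>k\<in>{1..T}. (sig(t := s)) k > 0" if "s \<in> {0<..}" for s
      using pos that by auto
    show "exp_cost T h b p w mu (sig(t := x)) q \<le> exp_cost T h b p w mu (sig(t := y)) q"
      unfolding exp_cost_eq[OF pos_upd[OF x] T] exp_cost_eq[OF pos_upd[OF y] T]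
      using assms(1-3) x \<open>x \<le> y\<close>
      by (intro add_mono mult_left_mono sum_mono order_refl mono_pos mono_neg) auto
  qed
qed

end
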